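(* Let $\mathcal A_{ML}$ be the MLMC estimator based on $\{X_\ell\}$ satisfying Assumption A with $\gamma\ge\beta$, suppose Assumption B holds, and suppose that for every $\nu>0$ $$\lim_{\ell\to\infty}\mathbf 1_{\{V_\ell>0\}}\,\mathbb E\Big[\frac{|\Delta_\ell X-\mathbb E[\Delta_\ell X]|^2}{V_\ell}\mathbf 1\Big\{\frac{|\Delta_\ell X-\mathbb E[\Delta_\ell X]|^2}{V_\ell}>e^{(2\alpha-\gamma)\ell}S_\ell^2\,\nu\Big\}\Big]=0.$$ Then the normalized MLMC estimator satisfies the extended CLT condition.
   Context: Let $(\Omega,\mathcal F,\mathbb P)$ be a probability space, $X\in L^2(\Omega)$ a real random variable and $\{X_\ell\}_{\ell=-1}^\infty\subset L^2(\Omega)$ with $X_{-1}:=0$. Put $\Delta_\ell X:=X_\ell-X_{\ell-1}$, $V_\ell:=\mathrm{Var}(\Delta_\ell X)$, and let $C_\ell>0$ denote the (given) cost of sampling $\Delta_\ell X$. Assumption A: there are positive constants $\alpha,\beta,\gamma$ with $\min(\beta,\gamma)\le 2\alpha$, and $c_\alpha>0$, such that for all $\ell\in\mathbb N_0$: $|\mathbb E[X-X_\ell]|\le c_\alpha e^{-\alpha\ell}$; $V_\ell\le C e^{-\beta\ell}$ for some constant $C>0$; and $c e^{\gamma\ell}<C_\ell<C' e^{\gamma\ell}$ for constants $0<c<C'$. Define $S_k:=\sum_{\ell=0}^k\sqrt{V_\ell C_\ell}$. MLMC estimator: for $\epsilon>0$, $L(\epsilon):=\max(\lceil \log(c_\alpha\epsilon^{-1})/\alpha\rceil,1)$,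 $M_\ell(\epsilon):=\max\big(\lceil \epsilon^{-2}\sqrt{V_\ell/C_\ell}\,S_{L(\epsilon)}\rceil,1\big)$, and $\mathcal A_{ML}(\epsilon):=\sum_{\ell=0}^{L(\epsilon)}\frac{1}{M_\ell(\epsilon)}\sum_{i=1}^{M_\ell(\epsilon)}\Delta_\ell X^i$, where the family $\{\Delta_\ell X^i\}$ is mutually independent and each $\Delta_\ell X^i$ has the law of $\Delta_\ell X$. Conventions: $0\cdot(\pm\infty)=0$, $0/0=0$. Assumption B: $V_0>0$; if $\beta=\gamma$ then $\lim_{k\to\infty}S_k=\infty$; if $\gamma>\beta$ then $\beta<2\alpha$ and there exists $\upsilon\in[\beta,2\alpha)$ with $\liminf_{k\to\infty}S_k e^{(\upsilon-\gamma)k/2}>1$. Extended CLT condition: $\frac{\mathcal A_{ML}(\epsilon)-\mathbb E[X_{L(\epsilon)}]}{\sqrt{\mathrm{Var}(\mathcal A_{ML}(\epsilon))}}\xrightarrow{d}\mathcal N(0,1)$ as $\epsilon\downarrow0$, and $\lim_{\epsilon\downarrow0}\max_{0\le\ell\le L(\epsilon)}\frac{V_\ell}{M_\ell(\epsilon)^2\,\mathrm{Var}(\mathcal A_{ML}(\epsilon))}=0$. *)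

theory Defs
  imports "HOL-Probability.Probability"
begin

text \<open>Level differences, with the convention X_{-1} = 0.\<close>
definition dlt :: "(nat \<Rightarrow> 'a \<Rightarrow> real) \<Rightarrow> nat \<Rightarrow> 'a \<Rightarrow> real" where
  "dlt X l = (\<lambda>\<omega>. X l \<omega> - (if l = 0 then 0 else X (l - 1) \<omega>))"

definition expct :: "'a measure \<Rightarrow> ('a \<Rightarrow> real) \<Rightarrow> real" where
  "expct M f = (\<integral>\<omega>. f \<omega> \<partial>M)"

definition var :: "'a measure \<Rightarrow> ('a \<Rightarrow> real) \<Rightarrow> real" where
  "var M f = (\<integral>\<omega>. (f \<omega> - expct M f)\<^sup>2 \<partial>M)"

definition Vl :: "'a measure \<Rightarrow> (nat \<Rightarrow> 'a \<Rightarrow> real) \<Rightarrow> nat \<Rightarrow> real" where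
  "Vl M X l = var M (dlt X l)"

definition Ssum :: "'a measure \<Rightarrow> (nat \<Rightarrow> 'a \<Rightarrow> real) \<Rightarrow> (nat \<Rightarrow> real) \<Rightarrow> nat \<Rightarrow> real" where
  "Ssum M X Cost k = (\<Sum>l\<le>k. sqrt (Vl M X l * Cost l))"

definition Lev :: "real \<Rightarrow> real \<Rightarrow> real \<Rightarrow> nat" where
  "Lev calpha alpha eps = nat (max \<lceil>ln (calpha / eps) / alpha\<rceil> 1)"

definition Msamp :: "'a measure \<Rightarrow> (nat \<Rightarrow> 'a \<Rightarrow> real) \<Rightarrow> (nat \<Rightarrow> real) \<Rightarrow> real \<Rightarrow> real \<Rightarrow> real \<Rightarrow> nat \<Rightarrow> nat" where
  "Msamp M X Cost calpha alpha eps l =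
     nat (max \<lceil>(1 / eps\<^sup>2) * sqrt (Vl M X l / Cost l) * Ssum M X Cost (Lev calpha alpha eps)\<rceil> 1)"

text \<open>The MLMC estimator, built from i.i.d. copies Y l i (i >= 1) of Delta_l X living on N.\<close>
definition mlmc :: "'a measure \<Rightarrow> (nat \<Rightarrow> 'a \<Rightarrow> real) \<Rightarrow> (nat \<Rightarrow> real) \<Rightarrow> real \<Rightarrow> real
     \<Rightarrow> (nat \<Rightarrow> nat \<Rightarrow> 'b \<Rightarrow> real) \<Rightarrow> real \<Rightarrow> 'b \<Rightarrow> real" where
  "mlmc M X Cost calpha alpha Y eps =
     (\<lambda>\<omega>. \<Sum>l\<le>Lev calpha alpha eps.
        (1 / real (Msamp M X Cost calpha alpha eps l)) *
        (\<Sum>i\<in>{1..Msamp M X Cost calpha alpha eps l}. Y l i \<omega>))"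

text \<open>Convergence in distribution as eps tends to 0 from the right: along every
  positive null sequence, weak convergence (of cdfs at continuity points).\<close>
definition conv_distr_at_right0 :: "(real \<Rightarrow> real measure) \<Rightarrow> real measure \<Rightarrow> bool" where
  "conv_distr_at_right0 \<mu> \<nu> \<longleftrightarrow>
     (\<forall>e :: nat \<Rightarrow> real. (\<forall>n. e n > 0) \<longrightarrow> e \<longlonglongrightarrow> 0 \<longrightarrow> weak_conv_m (\<lambda>n. \<mu> (e n)) \<nu>)"

end

theory Submission
  imports Defs
begin

text \<open>
  After subtracting its mean, the estimator is a sum of independent centred terms
  (Y(l,i) - mu(l)) / M(l) with total variance sigma2(eps) = sum_l V(l) / M(l), so it suffices to
  check Lindeberg's condition for the normalised array; Lindeberg's theorem itself is proved
  below through characteristic functions. The choice of M(l) forces sigma2(eps) >= eps^2 / 2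
  eventually, and together with eps e^(alpha L) <= c_alpha e^alpha this gives
  M(l)^2 sigma2 / V(l) >= kappa e^(2 alpha L - gamma l) S(L)^2. The Lindeberg sum is a convex
  combination of the level tails at these thresholds: for large l they exceed
  kappa delta^2 e^((2 alpha - gamma) l) S(l)^2, where the hypothesis makes the tails small,
  and for the finitely many small l they grow with L. Assumption B enters only through
  e^((gamma - 2 alpha) k) / S(k)^2 -> 0, which also bounds the largest variance share
  V(l) / (M(l)^2 sigma2).
\<close>

section \<open>Lindeberg's central limit theorem\<close>

lemma abs_exp_neg_minus_linear_le:
  fixes x :: real
  assumes "x \<ge> 0"
  shows "\<bar>exp (- x) - (1 - x)\<bar> \<le> x\<^sup>2"
proof -
  have lower: "1 - x \<le> exp (- x)" using exp_ge_add_one_self[of "-x"] by simp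
  have "exp (- x) \<le> 1 / (1 + x)"
    using exp_ge_add_one_self[of x] assms by (simp add: exp_minus field_simps)
  also have "\<dots> \<le> 1 - x + x\<^sup>2"
    using assms by (simp add: field_simps power2_eq_square)
  finally show ?thesis using lower by (simp add: abs_if)
qed

definition lindeberg_term :: "'a measure \<Rightarrow> ('a \<Rightarrow> real) \<Rightarrow> real \<Rightarrow> real" where
  "lindeberg_term M Z \<delta> = (\<integral>\<omega>. (Z \<omega>)\<^sup>2 * indicator {\<omega>. \<delta>\<^sup>2 < (Z \<omega>)\<^sup>2} \<omega> \<partial>M)"

context prob_space
begin

lemma integrable_lindeberg_integrand:
  fixes Z :: "'a \<Rightarrow> real"
  assumes [measurable]: "Z \<in> borel_measurable M" and "integrable M (\<lambda>\<omega>. (Z \<omega>)\<^sup>2)"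
  shows "integrable M (\<lambda>\<omega>. (Z \<omega>)\<^sup>2 * indicator {\<omega>. \<delta>\<^sup>2 < (Z \<omega>)\<^sup>2} \<omega>)"
  by (rule Bochner_Integration.integrable_bound[OF assms(2)]) (auto simp: indicator_def)

lemma lindeberg_term_nonneg: "lindeberg_term M Z \<delta> \<ge> 0"
  unfolding lindeberg_term_def by (auto intro!: integral_nonneg_AE simp: indicator_def)

lemma second_moment_le_lindeberg_term:
  fixes Z :: "'a \<Rightarrow> real"
  assumes [measurable]: "Z \<in> borel_measurable M" and Z2: "integrable M (\<lambda>\<omega>. (Z \<omega>)\<^sup>2)"
  shows "expectation (\<lambda>\<omega>. (Z \<omega>)\<^sup>2) \<le> \<delta>\<^sup>2 + lindeberg_term M Z \<delta>"
proof -
  have "expectation (\<lambda>\<omega>. (Z \<omega>)\<^sup>2)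
      \<le> expectation (\<lambda>\<omega>. \<delta>\<^sup>2 + (Z \<omega>)\<^sup>2 * indicator {\<omega>. \<delta>\<^sup>2 < (Z \<omega>)\<^sup>2} \<omega>)"
    using integrable_lindeberg_integrand[OF _ Z2]
    by (intro integral_mono Z2) (auto simp: indicator_def)
  then show ?thesis
    using integrable_lindeberg_integrand[OF _ Z2] by (simp add: lindeberg_term_def prob_space)
qed

text \<open>Splitting at \<open>\<bar>Z\<bar> = \<delta>\<close>: the cubic bound is used on the bulk, the quadratic one on the tail.\<close>
lemma expectation_min_cubic_quadratic_le:
  fixes Z :: "'a \<Rightarrow> real"
  assumes [measurable]: "Z \<in> borel_measurable M" and Z2: "integrable M (\<lambda>\<omega>. (Z \<omega>)\<^sup>2)"
    and "\<delta> > 0"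
  shows "expectation (\<lambda>\<omega>. min (6 * (Z \<omega>)\<^sup>2) (\<bar>t\<bar> * \<bar>Z \<omega>\<bar>^3))
    \<le> \<bar>t\<bar> * \<delta> * expectation (\<lambda>\<omega>. (Z \<omega>)\<^sup>2) + 6 * lindeberg_term M Z \<delta>"
proof -
  have pointwise: "min (6 * z\<^sup>2) (\<bar>t\<bar> * \<bar>z\<bar>^3)
      \<le> \<bar>t\<bar> * \<delta> * z\<^sup>2 + 6 * (z\<^sup>2 * indicator {\<omega>. \<delta>\<^sup>2 < (Z \<omega>)\<^sup>2} \<omega>)"
    if "z = Z \<omega>" for z \<omega>
  proof (cases "\<delta>\<^sup>2 < z\<^sup>2")
    case True
    then show ?thesis using that \<open>\<delta> > 0\<close> by (simp add: min.coboundedI1)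
  next
    case False
    then have "\<bar>z\<bar> \<le> \<delta>" using \<open>\<delta> > 0\<close> by (metis abs_le_square_iff abs_of_pos not_less)
    then have "\<bar>t\<bar> * (z\<^sup>2 * \<bar>z\<bar>) \<le> \<bar>t\<bar> * (z\<^sup>2 * \<delta>)"
      by (intro mult_left_mono) auto
    then show ?thesis using that False
      by (simp add: power3_eq_cube power2_eq_square ac_simps min.coboundedI2)
  qed
  have "expectation (\<lambda>\<omega>. min (6 * (Z \<omega>)\<^sup>2) (\<bar>t\<bar> * \<bar>Z \<omega>\<bar>^3))
      \<le> expectation (\<lambda>\<omega>. \<bar>t\<bar> * \<delta> * (Z \<omega>)\<^sup>2 + 6 * ((Z \<omega>)\<^sup>2 * indicator {\<omega>. \<delta>\<^sup>2 < (Z \<omega>)\<^sup>2} \<omega>))"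
    using Z2 integrable_lindeberg_integrand[OF _ Z2] pointwise \<open>\<delta> > 0\<close>
    by (intro integral_mono') (auto simp: indicator_def)
  then show ?thesis
    using Z2 integrable_lindeberg_integrand[OF _ Z2] by (simp add: lindeberg_term_def)
qed

lemma char_centred_approx_gaussian:
  fixes Z :: "'a \<Rightarrow> real"
  assumes [measurable]: "Z \<in> borel_measurable M" and Z2: "integrable M (\<lambda>\<omega>. (Z \<omega>)\<^sup>2)"
    and mean: "expectation Z = 0" and "\<delta> > 0"
  defines "s \<equiv> expectation (\<lambda>\<omega>. (Z \<omega>)\<^sup>2)"
  shows "cmod (char (distr M borel Z) t - exp (- (t\<^sup>2 * s / 2)))
    \<le> \<bar>t\<bar>^3 * \<delta> * s / 6 + t\<^sup>2 * lindeberg_term M Z \<delta> + (t\<^sup>2 * s / 2)\<^sup>2"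
proof -
  have Z1: "integrable M Z" by (rule square_integrable_imp_integrable[OF _ Z2]) simp
  have "cmod (char (distr M borel Z) t - (1 - t\<^sup>2 * s / 2))
      \<le> t\<^sup>2 / 6 * expectation (\<lambda>\<omega>. min (6 * (Z \<omega>)\<^sup>2) (\<bar>t\<bar> * \<bar>Z \<omega>\<bar>^3))"
    using char_approx3'[OF _ Z1 Z2 mean _ refl] mean by (simp add: s_def)
  also have "\<dots> \<le> t\<^sup>2 / 6 * (\<bar>t\<bar> * \<delta> * s + 6 * lindeberg_term M Z \<delta>)"
    using expectation_min_cubic_quadratic_le[OF _ Z2 \<open>\<delta> > 0\<close>, of t]
    by (intro mult_left_mono) (simp_all add: s_def)
  also have "\<dots> = \<bar>t\<bar>^3 * \<delta> * s / 6 + t\<^sup>2 * lindeberg_term M Z \<delta>"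
    by (simp add: field_simps power2_eq_square power3_eq_cube)
  finally have char_taylor: "cmod (char (distr M borel Z) t - complex_of_real (1 - t\<^sup>2 * s / 2))
      \<le> \<bar>t\<bar>^3 * \<delta> * s / 6 + t\<^sup>2 * lindeberg_term M Z \<delta>" by simp
  have "cmod (complex_of_real (1 - t\<^sup>2 * s / 2) - exp (- (t\<^sup>2 * s / 2))) \<le> (t\<^sup>2 * s / 2)\<^sup>2"
    using abs_exp_neg_minus_linear_le[of "t\<^sup>2 * s / 2"]
    by (simp flip: of_real_exp of_real_diff add: norm_minus_commute s_def)
  with char_taylor show ?thesis
    using norm_triangle_ineq[of "char (distr M borel Z) t - complex_of_real (1 - t\<^sup>2 * s / 2)"
        "complex_of_real (1 - t\<^sup>2 * s / 2) - exp (- (t\<^sup>2 * s / 2))"]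
    by simp
qed

lemma char_indep_sum_approx_gaussian:
  fixes Z :: "'i \<Rightarrow> 'a \<Rightarrow> real"
  assumes "finite J" and indep: "indep_vars (\<lambda>_. borel) Z J"
    and Z2: "\<And>j. j \<in> J \<Longrightarrow> integrable M (\<lambda>\<omega>. (Z j \<omega>)\<^sup>2)"
    and mean: "\<And>j. j \<in> J \<Longrightarrow> expectation (Z j) = 0"
    and total: "(\<Sum>j\<in>J. expectation (\<lambda>\<omega>. (Z j \<omega>)\<^sup>2)) = 1"
    and "\<delta> > 0"
  defines "\<Lambda> \<equiv> \<Sum>j\<in>J. lindeberg_term M (Z j) \<delta>"
  shows "cmod (char (distr M borel (\<lambda>\<omega>. \<Sum>j\<in>J. Z j \<omega>)) t - exp (- (t\<^sup>2) / 2))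
    \<le> \<bar>t\<bar>^3 * \<delta> / 6 + t\<^sup>2 * \<Lambda> + t^4 * (\<delta>\<^sup>2 + \<Lambda>) / 4"
proof -
  define s where "s j = expectation (\<lambda>\<omega>. (Z j \<omega>)\<^sup>2)" for j
  define x where "x j = t\<^sup>2 * s j / 2" for j
  have [measurable]: "j \<in> J \<Longrightarrow> random_variable borel (Z j)" for j
    using indep unfolding indep_vars_def2 by simp
  have x_nonneg: "x j \<ge> 0" for j by (simp add: x_def s_def)
  have sum_x: "(\<Sum>j\<in>J. x j) = t\<^sup>2 / 2"
    using total by (simp add: x_def s_def flip: sum_divide_distrib sum_distrib_left)
  have x_le: "x j \<le> t\<^sup>2 * (\<delta>\<^sup>2 + \<Lambda>) / 2" if "j \<in> J" for j
  proof -
    have "lindeberg_term M (Z j) \<delta> \<le> \<Lambda>"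
      unfolding \<Lambda>_def using that \<open>finite J\<close> by (intro member_le_sum lindeberg_term_nonneg)
    then show ?thesis
      using second_moment_le_lindeberg_term[OF _ Z2[OF that], of \<delta>] that
      by (auto simp: x_def s_def intro!: divide_right_mono mult_left_mono)
  qed
  have "exp (- (t\<^sup>2) / 2) = (\<Prod>j\<in>J. exp (- x j))"
    using \<open>finite J\<close> by (simp add: sum_x sum_negf flip: exp_sum)
  then have "cmod (char (distr M borel (\<lambda>\<omega>. \<Sum>j\<in>J. Z j \<omega>)) t - exp (- (t\<^sup>2) / 2))
      = cmod ((\<Prod>j\<in>J. char (distr M borel (Z j)) t) - (\<Prod>j\<in>J. complex_of_real (exp (- x j))))"
    by (simp add: char_distr_sum[OF indep])
  also have "\<dots> \<le> (\<Sum>j\<in>J. cmod (char (distr M borel (Z j)) t - exp (- x j)))"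
    using x_nonneg real_distribution.cmod_char_le_1[OF real_distribution_distr]
    by (intro norm_prod_diff) auto
  also have "\<dots> \<le> (\<Sum>j\<in>J. \<bar>t\<bar>^3 * \<delta> * s j / 6 + t\<^sup>2 * lindeberg_term M (Z j) \<delta> + (x j)\<^sup>2)"
    using char_centred_approx_gaussian[OF _ Z2 mean \<open>\<delta> > 0\<close>]
    by (intro sum_mono) (simp add: x_def s_def)
  also have "\<dots> = \<bar>t\<bar>^3 * \<delta> / 6 + t\<^sup>2 * \<Lambda> + (\<Sum>j\<in>J. x j * x j)"
    using total by (simp add: \<Lambda>_def s_def sum.distrib power2_eq_square
        flip: sum_divide_distrib sum_distrib_left)
  also have "(\<Sum>j\<in>J. x j * x j) \<le> (\<Sum>j\<in>J. x j * (t\<^sup>2 * (\<delta>\<^sup>2 + \<Lambda>) / 2))"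
    using x_le x_nonneg by (intro sum_mono mult_left_mono) auto
  also have "\<dots> = t\<^sup>2 / 2 * (t\<^sup>2 * (\<delta>\<^sup>2 + \<Lambda>) / 2)"
    by (simp only: sum_x flip: sum_distrib_right)
  also have "\<dots> = t^4 * (\<delta>\<^sup>2 + \<Lambda>) / 4"
    by (simp add: power2_eq_square power4_eq_xxxx)
  finally show ?thesis by simp
qed

lemma indep_centred_sum_second_moment:
  fixes Z :: "'i \<Rightarrow> 'a \<Rightarrow> real"
  assumes "finite J" and indep: "indep_vars (\<lambda>_. borel) Z J"
    and Z2: "\<And>j. j \<in> J \<Longrightarrow> integrable M (\<lambda>\<omega>. (Z j \<omega>)\<^sup>2)"
    and mean: "\<And>j. j \<in> J \<Longrightarrow> expectation (Z j) = 0"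
  shows "integrable M (\<lambda>\<omega>. (\<Sum>j\<in>J. Z j \<omega>)\<^sup>2)"
    and "expectation (\<lambda>\<omega>. (\<Sum>j\<in>J. Z j \<omega>)\<^sup>2) = (\<Sum>j\<in>J. expectation (\<lambda>\<omega>. (Z j \<omega>)\<^sup>2))"
proof -
  have Z1: "j \<in> J \<Longrightarrow> integrable M (Z j)" for j
    using indep Z2 unfolding indep_vars_def2 by (auto intro: square_integrable_imp_integrable)
  from assms Z1
  have "integrable M (\<lambda>\<omega>. (\<Sum>j\<in>J. Z j \<omega>)\<^sup>2) \<and>
      expectation (\<lambda>\<omega>. (\<Sum>j\<in>J. Z j \<omega>)\<^sup>2) = (\<Sum>j\<in>J. expectation (\<lambda>\<omega>. (Z j \<omega>)\<^sup>2))"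
  proof (induction J rule: finite_induct)
    case (insert i I)
    have indep_I: "indep_vars (\<lambda>_. borel) Z I"
      using insert.prems(1) by (rule indep_vars_subset) auto
    have "indep_var borel (Z i) borel (\<lambda>\<omega>. \<Sum>j\<in>I. Z j \<omega>)"
      using insert.hyps insert.prems(1) by (rule indep_vars_sum)
    moreover have "integrable M (Z i)" and "integrable M (\<lambda>\<omega>. \<Sum>j\<in>I. Z j \<omega>)"
      using insert.prems(4) by auto
    ultimately have cross: "integrable M (\<lambda>\<omega>. Z i \<omega> * (\<Sum>j\<in>I. Z j \<omega>))"
        "expectation (\<lambda>\<omega>. Z i \<omega> * (\<Sum>j\<in>I. Z j \<omega>)) = 0"
      using insert.prems(3)[of i] by (simp_all add: indep_var_integrable indep_var_lebesgue_integral)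
    have "(\<lambda>\<omega>. (\<Sum>j\<in>insert i I. Z j \<omega>)\<^sup>2)
        = (\<lambda>\<omega>. (Z i \<omega>)\<^sup>2 + 2 * (Z i \<omega> * (\<Sum>j\<in>I. Z j \<omega>)) + (\<Sum>j\<in>I. Z j \<omega>)\<^sup>2)"
      using insert.hyps by (simp add: power2_sum algebra_simps)
    then show ?case
      using insert.IH[OF indep_I] insert.prems insert.hyps cross by simp
  qed simp
  then show "integrable M (\<lambda>\<omega>. (\<Sum>j\<in>J. Z j \<omega>)\<^sup>2)"
    and "expectation (\<lambda>\<omega>. (\<Sum>j\<in>J. Z j \<omega>)\<^sup>2) = (\<Sum>j\<in>J. expectation (\<lambda>\<omega>. (Z j \<omega>)\<^sup>2))"
    by auto
qed

theorem lindeberg_clt: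
  fixes Z :: "nat \<Rightarrow> 'i \<Rightarrow> 'a \<Rightarrow> real"
  assumes "\<And>n. finite (J n)" and indep: "\<And>n. indep_vars (\<lambda>_. borel) (Z n) (J n)"
    and Z2: "\<And>n j. j \<in> J n \<Longrightarrow> integrable M (\<lambda>\<omega>. (Z n j \<omega>)\<^sup>2)"
    and mean: "\<And>n j. j \<in> J n \<Longrightarrow> expectation (Z n j) = 0"
    and total: "\<And>n. (\<Sum>j\<in>J n. expectation (\<lambda>\<omega>. (Z n j \<omega>)\<^sup>2)) = 1"
    and lindeberg: "\<And>\<delta>. \<delta> > 0 \<Longrightarrow> (\<lambda>n. \<Sum>j\<in>J n. lindeberg_term M (Z n j) \<delta>) \<longlonglongrightarrow> 0"
  shows "weak_conv_m (\<lambda>n. distr M borel (\<lambda>\<omega>. \<Sum>j\<in>J n. Z n j \<omega>)) std_normal_distribution"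
proof (rule levy_continuity)
  fix n
  have [measurable]: "j \<in> J n \<Longrightarrow> random_variable borel (Z n j)" for j
    using indep unfolding indep_vars_def2 by simp
  show "real_distribution (distr M borel (\<lambda>\<omega>. \<Sum>j\<in>J n. Z n j \<omega>))"
    by (rule real_distribution_distr) measurable
next
  fix t :: real
  define \<Lambda> where "\<Lambda> n \<delta> = (\<Sum>j\<in>J n. lindeberg_term M (Z n j) \<delta>)" for n \<delta>
  show "(\<lambda>n. char (distr M borel (\<lambda>\<omega>. \<Sum>j\<in>J n. Z n j \<omega>)) t) \<longlonglongrightarrow> char std_normal_distribution t"
    unfolding char_std_normal_distribution
  proof (rule tendstoI)
    fix r :: real assume "r > 0"
    have "((\<lambda>\<delta>. \<bar>t\<bar>^3 * \<delta> / 6 + t^4 * \<delta>\<^sup>2 / 4) \<longlongrightarrow> 0) (at_right 0)"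
      by (auto intro!: tendsto_eq_intros)
    then have "\<forall>\<^sub>F \<delta> in at_right 0. \<delta> > 0 \<and> \<bar>t\<bar>^3 * \<delta> / 6 + t^4 * \<delta>\<^sup>2 / 4 < r / 2"
      using \<open>r > 0\<close> by (auto simp: eventually_at_right_less dest!: order_tendstoD(2)[of _ _ _ "r / 2"]
          intro: eventually_conj)
    then obtain \<delta> where "\<delta> > 0" and small_\<delta>: "\<bar>t\<bar>^3 * \<delta> / 6 + t^4 * \<delta>\<^sup>2 / 4 < r / 2"
      using eventually_happens'[OF trivial_limit_at_right_real] by blast
    have "(\<lambda>n. t\<^sup>2 * \<Lambda> n \<delta> + t^4 * \<Lambda> n \<delta> / 4) \<longlonglongrightarrow> 0"
      using lindeberg[OF \<open>\<delta> > 0\<close>] unfolding \<Lambda>_def[symmetric]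
      by (auto intro!: tendsto_eq_intros)
    then have "\<forall>\<^sub>F n in sequentially. t\<^sup>2 * \<Lambda> n \<delta> + t^4 * \<Lambda> n \<delta> / 4 < r / 2"
      by (rule order_tendstoD(2)) (use \<open>r > 0\<close> in simp)
    then show "\<forall>\<^sub>F n in sequentially.
        dist (char (distr M borel (\<lambda>\<omega>. \<Sum>j\<in>J n. Z n j \<omega>)) t) (complex_of_real (exp (- (t\<^sup>2) / 2))) < r"
    proof (rule eventually_mono)
      fix n assume "t\<^sup>2 * \<Lambda> n \<delta> + t^4 * \<Lambda> n \<delta> / 4 < r / 2"
      moreover have "cmod (char (distr M borel (\<lambda>\<omega>. \<Sum>j\<in>J n. Z n j \<omega>)) t - exp (- (t\<^sup>2) / 2))
          \<le> \<bar>t\<bar>^3 * \<delta> / 6 + t\<^sup>2 * \<Lambda> n \<delta> + t^4 * (\<delta>\<^sup>2 + \<Lambda> n \<delta>) / 4"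
        unfolding \<Lambda>_def
        by (rule char_indep_sum_approx_gaussian[OF assms(1) indep Z2 mean total \<open>\<delta> > 0\<close>])
      ultimately show "dist (char (distr M borel (\<lambda>\<omega>. \<Sum>j\<in>J n. Z n j \<omega>)) t) (complex_of_real (exp (- (t\<^sup>2) / 2))) < r"
        using small_\<delta> by (simp add: dist_norm field_simps)
    qed
  qed
qed (rule real_dist_normal_dist)

end

lemma
  fixes f :: "real \<Rightarrow> real"
  assumes law: "distr N borel Y = distr M borel D"
    and [measurable]: "Y \<in> borel_measurable N" "D \<in> borel_measurable M" "f \<in> borel_measurable borel"
  shows integral_comp_eq_of_distr_eq: "(\<integral>\<omega>. f (Y \<omega>) \<partial>N) = (\<integral>\<omega>. f (D \<omega>) \<partial>M)"
    and integrable_comp_iff_of_distr_eq: "integrable N (\<lambda>\<omega>. f (Y \<omega>)) \<longleftrightarrow> integrable M (\<lambda>\<omega>. f (D \<omega>))"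
  using integral_distr[of Y N borel f] integral_distr[of D M borel f]
    integrable_distr_eq[of Y N borel f] integrable_distr_eq[of D M borel f] law
  by simp_all

lemma exp_div_square_tendsto_0_of_at_top:
  fixes s :: "nat \<Rightarrow> real"
  assumes "a \<le> 0" and "filterlim s at_top sequentially"
  shows "(\<lambda>k. exp (a * real k) / (s k)\<^sup>2) \<longlonglongrightarrow> 0"
proof (rule real_tendsto_sandwich[OF _ _ tendsto_const])
  have "filterlim (\<lambda>k. (s k)\<^sup>2) at_top sequentially"
    using filterlim_pow_at_top[OF _ assms(2), of 2] by simp
  then show "(\<lambda>k. inverse ((s k)\<^sup>2)) \<longlonglongrightarrow> 0"
    by (rule tendsto_inverse_0_at_top)
  show "\<forall>\<^sub>F k in sequentially. exp (a * real k) / (s k)\<^sup>2 \<le> inverse ((s k)\<^sup>2)"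
    using assms(1) by (intro always_eventually allI)
      (simp add: divide_inverse mult_nonpos_nonneg mult_left_le_one_le)
qed simp

lemma exp_div_square_tendsto_0_of_liminf:
  fixes s :: "nat \<Rightarrow> real"
  assumes "a + b < 0" and "liminf (\<lambda>k. ereal (s k * exp (b * real k / 2))) > 1"
  shows "(\<lambda>k. exp (a * real k) / (s k)\<^sup>2) \<longlonglongrightarrow> 0"
proof (rule real_tendsto_sandwich[OF _ _ tendsto_const])
  have "(\<lambda>k. exp (a + b) ^ k) \<longlonglongrightarrow> 0"
    using assms(1) by (intro LIMSEQ_power_zero) simp
  then show "(\<lambda>k. exp ((a + b) * real k)) \<longlonglongrightarrow> 0"
    by (simp add: mult.commute flip: exp_of_nat_mult)
  show "\<forall>\<^sub>F k in sequentially. exp (a * real k) / (s k)\<^sup>2 \<le> exp ((a + b) * real k)"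
    using less_LiminfD[OF assms(2)]
  proof (rule eventually_mono)
    fix k assume "ereal (s k * exp (b * real k / 2)) > 1"
    then have "1 < (s k * exp (b * real k / 2))\<^sup>2"
      by (simp add: less_1_mult power2_eq_square)
    also have "\<dots> = (s k)\<^sup>2 * exp (b * real k)"
      by (simp add: power_mult_distrib power2_eq_square flip: exp_add)
    finally have "1 < (s k)\<^sup>2 * exp (b * real k)" .
    moreover from this have "(s k)\<^sup>2 > 0"
      by (cases "s k = 0") auto
    ultimately have "1 / (s k)\<^sup>2 \<le> exp (b * real k)"
      by (simp add: divide_le_eq mult.commute)
    then have "exp (a * real k) * (1 / (s k)\<^sup>2) \<le> exp (a * real k) * exp (b * real k)"
      by (rule mult_left_mono) simp
    then show "exp (a * real k) / (s k)\<^sup>2 \<le> exp ((a + b) * real k)"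
      by (simp add: distrib_right exp_add)
  qed
qed simp

lemma square_div_linear_ge:
  fixes b C S e :: real
  assumes "b \<ge> 0" "C > 0" "S > 0" "e > 0"
  shows "e * (b / S - e * C / S\<^sup>2) \<le> e * b\<^sup>2 / (b * S + e * C)"
proof -
  have "(b * S - e * C) * (b * S + e * C) = b\<^sup>2 * S\<^sup>2 - (e * C)\<^sup>2"
    by (simp add: power2_eq_square algebra_simps)
  then have "(b * S - e * C) * (b * S + e * C) \<le> b\<^sup>2 * S\<^sup>2"
    by simp
  then have "(b * S - e * C) / S\<^sup>2 \<le> b\<^sup>2 / (b * S + e * C)"
    using assms by (simp add: divide_le_eq le_divide_eq add_nonneg_pos mult.commute)
  then have "e * ((b * S - e * C) / S\<^sup>2) \<le> e * (b\<^sup>2 / (b * S + e * C))"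
    using assms(4) by (intro mult_left_mono) auto
  then show ?thesis
    using assms by (simp add: field_simps power2_eq_square)
qed

lemma exp_div_square_tendsto_0_by_cases:
  fixes s :: "nat \<Rightarrow> real"
  assumes "min beta gamma \<le> 2 * alpha" and "gamma \<ge> beta"
    and "beta = gamma \<Longrightarrow> filterlim s at_top sequentially"
    and "gamma > beta \<Longrightarrow>
      \<exists>u. u < 2 * alpha \<and> liminf (\<lambda>k. ereal (s k * exp ((u - gamma) * real k / 2))) > 1"
  shows "(\<lambda>k. exp ((gamma - 2 * alpha) * real k) / (s k)\<^sup>2) \<longlonglongrightarrow> 0"
proof (cases "beta = gamma")
  case True
  with assms(1,3) show ?thesis by (intro exp_div_square_tendsto_0_of_at_top) auto
next
  case False
  with assms(2,4) obtain u where "u < 2 * alpha"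
    and "liminf (\<lambda>k. ereal (s k * exp ((u - gamma) * real k / 2))) > 1"
    by auto
  then show ?thesis by (intro exp_div_square_tendsto_0_of_liminf[of _ "u - gamma"]) auto
qed

section \<open>The multilevel Monte Carlo estimator\<close>

locale mlmc_lindeberg = M: prob_space M + N: prob_space N
  for M :: "'a measure" and N :: "'b measure" +
  fixes Xl :: "nat \<Rightarrow> 'a \<Rightarrow> real" and Cost :: "nat \<Rightarrow> real"
    and Y :: "nat \<Rightarrow> nat \<Rightarrow> 'b \<Rightarrow> real" and alpha gamma calpha Cmax :: real
  assumes Xl_measurable[measurable]: "\<And>l. Xl l \<in> borel_measurable M"
    and Xl_L2: "\<And>l. integrable M (\<lambda>\<omega>. (Xl l \<omega>)\<^sup>2)"
    and indep: "prob_space.indep_vars N (\<lambda>_. borel) (\<lambda>(l, i). Y l i) UNIV"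
    and law: "\<And>l i. distr N borel (Y l i) = distr M borel (dlt Xl l)"
    and alpha_pos: "alpha > 0" and gamma_pos: "gamma > 0" and calpha_pos: "calpha > 0"
    and Cost_pos: "\<And>l. Cost l > 0"
    and Cost_le: "\<And>l. Cost l \<le> Cmax * exp (gamma * real l)"
    and V0_pos: "Vl M Xl 0 > 0"
    and exp_div_S_square_tendsto_0:
      "(\<lambda>k. exp ((gamma - 2 * alpha) * real k) / (Ssum M Xl Cost k)\<^sup>2) \<longlonglongrightarrow> 0"
    and lindeberg: "\<And>\<nu>. \<nu> > 0 \<Longrightarrow>
       (\<lambda>l. if Vl M Xl l > 0 then
              expct M (\<lambda>\<omega>. ((dlt Xl l \<omega> - expct M (dlt Xl l))\<^sup>2 / Vl M Xl l) *
                 indicator {\<omega>. (dlt Xl l \<omega> - expct M (dlt Xl l))\<^sup>2 / Vl M Xl l >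
                     exp ((2 * alpha - gamma) * real l) * (Ssum M Xl Cost l)\<^sup>2 * \<nu>} \<omega>)
            else 0) \<longlonglongrightarrow> 0"
begin

abbreviation "V \<equiv> Vl M Xl"
abbreviation "S \<equiv> Ssum M Xl Cost"
abbreviation "mu l \<equiv> expct M (dlt Xl l)"
abbreviation "L \<equiv> Lev calpha alpha"
abbreviation "Ms \<equiv> Msamp M Xl Cost calpha alpha"
abbreviation "estimator \<equiv> mlmc M Xl Cost calpha alpha Y"

lemma dlt_measurable[measurable]: "dlt Xl l \<in> borel_measurable M"
  unfolding dlt_def by measurable

lemma integrable_dlt_square: "integrable M (\<lambda>\<omega>. (dlt Xl l \<omega>)\<^sup>2)"
proof (rule Bochner_Integration.integrable_bound)
  show "integrable M (\<lambda>\<omega>. 2 * (Xl l \<omega>)\<^sup>2 + 2 * (if l = 0 then 0 else Xl (l - 1) \<omega>)\<^sup>2)"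
    using Xl_L2[of l] Xl_L2[of "l - 1"] by (cases "l = 0") auto
  have "(a - b)\<^sup>2 \<le> 2 * a\<^sup>2 + 2 * b\<^sup>2" for a b :: real
    using zero_le_power2[of "a + b"] by (simp add: power2_eq_square algebra_simps)
  then show "AE \<omega> in M. norm ((dlt Xl l \<omega>)\<^sup>2)
      \<le> norm (2 * (Xl l \<omega>)\<^sup>2 + 2 * (if l = 0 then 0 else Xl (l - 1) \<omega>)\<^sup>2)"
    unfolding dlt_def by auto
qed measurable

lemma integrable_dlt: "integrable M (dlt Xl l)"
  by (rule M.square_integrable_imp_integrable[OF _ integrable_dlt_square]) simp

lemma integrable_centred_dlt_square: "integrable M (\<lambda>\<omega>. (dlt Xl l \<omega> - mu l)\<^sup>2)"
  using integrable_dlt_square[of l] integrable_dlt[of l] by (simp add: power2_diff)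

lemma V_eq: "V l = M.expectation (\<lambda>\<omega>. (dlt Xl l \<omega> - mu l)\<^sup>2)"
  unfolding Vl_def var_def expct_def ..

lemma V_nonneg: "V l \<ge> 0"
  unfolding V_eq by simp

lemma sum_mu_eq: "(\<Sum>l\<le>n. mu l) = expct M (Xl n)"
proof (induction n)
  case (Suc n)
  have "mu (Suc n) = expct M (Xl (Suc n)) - expct M (Xl n)"
    using M.square_integrable_imp_integrable[OF _ Xl_L2] unfolding expct_def dlt_def by simp
  with Suc show ?case by simp
qed (simp add: expct_def dlt_def)

lemma Y_measurable[measurable]: "Y l i \<in> borel_measurable N"
  using indep unfolding N.indep_vars_def2 by (auto dest: bspec[of _ _ "(l, i)"])

lemma
  fixes f :: "real \<Rightarrow> real"
  assumes [measurable]: "f \<in> borel_measurable borel"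
  shows integral_comp_Y: "N.expectation (\<lambda>\<omega>. f (Y l i \<omega>)) = M.expectation (\<lambda>\<omega>. f (dlt Xl l \<omega>))"
    and integrable_comp_Y_iff:
      "integrable N (\<lambda>\<omega>. f (Y l i \<omega>)) \<longleftrightarrow> integrable M (\<lambda>\<omega>. f (dlt Xl l \<omega>))"
  by (simp_all add: integral_comp_eq_of_distr_eq[OF law] integrable_comp_iff_of_distr_eq[OF law])

lemma V_Cost_nonneg: "V l * Cost l \<ge> 0"
  using V_nonneg Cost_pos by (simp add: less_imp_le)

lemma S_pos: "S k > 0"
proof -
  have "sqrt (V 0 * Cost 0) \<le> S k"
    unfolding Ssum_def using V_Cost_nonneg by (intro member_le_sum) auto
  moreover have "sqrt (V 0 * Cost 0) > 0" using V0_pos Cost_pos[of 0] by simp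
  ultimately show ?thesis by linarith
qed

lemma S_mono: "k \<le> k' \<Longrightarrow> S k \<le> S k'"
  unfolding Ssum_def using V_Cost_nonneg by (intro sum_mono2) auto

lemma Ms_pos[simp]: "Ms eps l > 0"
  unfolding Msamp_def by simp

lemma Ms_neq_0[simp]: "Ms eps l \<noteq> 0"
  using Ms_pos by (rule gr_implies_not0)

definition sample_index :: "real \<Rightarrow> (nat \<times> nat) set" where
  "sample_index eps = Sigma {..L eps} (\<lambda>l. {1..Ms eps l})"

definition centred :: "real \<Rightarrow> nat \<times> nat \<Rightarrow> 'b \<Rightarrow> real" where
  "centred eps j \<omega> = (Y (fst j) (snd j) \<omega> - mu (fst j)) / real (Ms eps (fst j))"

definition sigma2 :: "real \<Rightarrow> real" where
  "sigma2 eps = (\<Sum>l\<le>L eps. V l / real (Ms eps l))"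

lemma finite_sample_index: "finite (sample_index eps)"
  unfolding sample_index_def by auto

lemma centred_measurable[measurable]: "centred eps j \<in> borel_measurable N"
  unfolding centred_def by measurable

lemma
  shows expectation_centred: "N.expectation (centred eps j) = 0"
    and integrable_centred_square: "integrable N (\<lambda>\<omega>. (centred eps j \<omega>)\<^sup>2)"
    and second_moment_centred:
      "N.expectation (\<lambda>\<omega>. (centred eps j \<omega>)\<^sup>2) = V (fst j) / (real (Ms eps (fst j)))\<^sup>2"
proof -
  obtain l i where j: "j = (l, i)" by (cases j)
  define m where "m = real (Ms eps l)"
  have "centred eps j = (\<lambda>\<omega>. (\<lambda>y. (y - mu l) / m) (Y l i \<omega>))"
    by (auto simp: centred_def j m_def)
  then show "N.expectation (centred eps j) = 0"
    using integral_comp_Y[of "\<lambda>y. (y - mu l) / m" l i] integrable_dlt[of l]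
    by (simp add: expct_def M.prob_space)
  have square: "(\<lambda>\<omega>. (centred eps j \<omega>)\<^sup>2) = (\<lambda>\<omega>. (\<lambda>y. (y - mu l)\<^sup>2 / m\<^sup>2) (Y l i \<omega>))"
    by (simp add: centred_def j m_def power_divide)
  then show "integrable N (\<lambda>\<omega>. (centred eps j \<omega>)\<^sup>2)"
    using integrable_comp_Y_iff[of "\<lambda>y. (y - mu l)\<^sup>2 / m\<^sup>2" l i] integrable_centred_dlt_square
    by simp
  show "N.expectation (\<lambda>\<omega>. (centred eps j \<omega>)\<^sup>2) = V (fst j) / (real (Ms eps (fst j)))\<^sup>2"
    unfolding square using integral_comp_Y[of "\<lambda>y. (y - mu l)\<^sup>2" l i] by (simp add: V_eq j m_def)
qed

lemma indep_centred: "N.indep_vars (\<lambda>_. borel) (centred eps) (sample_index eps)"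
proof -
  have "N.indep_vars (\<lambda>_. borel)
      (\<lambda>j \<omega>. (\<lambda>y. (y - mu (fst j)) / real (Ms eps (fst j))) ((\<lambda>(l, i). Y l i) j \<omega>)) UNIV"
    by (rule N.indep_vars_compose2[OF indep]) measurable
  then show ?thesis
    unfolding centred_def case_prod_beta by (rule N.indep_vars_subset) simp
qed

lemma estimator_minus_mean_eq:
  "estimator eps \<omega> - expct M (Xl (L eps)) = (\<Sum>j\<in>sample_index eps. centred eps j \<omega>)"
proof -
  have level: "(\<Sum>i\<in>{1..Ms eps l}. centred eps (l, i) \<omega>)
      = 1 / real (Ms eps l) * (\<Sum>i\<in>{1..Ms eps l}. Y l i \<omega>) - mu l" for l
    by (simp add: centred_def sum_subtractf field_simps flip: sum_divide_distrib)
  have "(\<Sum>j\<in>sample_index eps. centred eps j \<omega>)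
      = (\<Sum>l\<le>L eps. \<Sum>i\<in>{1..Ms eps l}. centred eps (l, i) \<omega>)"
    unfolding sample_index_def by (subst sum.Sigma) auto
  also have "\<dots> = estimator eps \<omega> - expct M (Xl (L eps))"
    unfolding level mlmc_def by (simp add: sum_subtractf sum_mu_eq)
  finally show ?thesis ..
qed

lemma sum_second_moment_centred:
  "(\<Sum>j\<in>sample_index eps. N.expectation (\<lambda>\<omega>. (centred eps j \<omega>)\<^sup>2)) = sigma2 eps"
proof -
  have "(\<Sum>j\<in>sample_index eps. N.expectation (\<lambda>\<omega>. (centred eps j \<omega>)\<^sup>2))
      = (\<Sum>l\<le>L eps. \<Sum>i\<in>{1..Ms eps l}. V l / (real (Ms eps l))\<^sup>2)"
    unfolding sample_index_def second_moment_centred by (subst sum.Sigma) (auto simp: case_prod_beta)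
  also have "\<dots> = sigma2 eps"
    unfolding sigma2_def by (simp add: power2_eq_square)
  finally show ?thesis .
qed

lemma var_estimator: "var N (estimator eps) = sigma2 eps"
proof -
  define c where "c = expct M (Xl (L eps))"
  have estimator_eq: "estimator eps = (\<lambda>\<omega>. c + (\<Sum>j\<in>sample_index eps. centred eps j \<omega>))"
    using estimator_minus_mean_eq[of eps] by (auto simp: c_def algebra_simps)
  note second_moment = N.indep_centred_sum_second_moment[OF finite_sample_index indep_centred
      integrable_centred_square expectation_centred]
  have "integrable N (centred eps j)" for j
    by (rule N.square_integrable_imp_integrable[OF _ integrable_centred_square]) simp
  then have "expct N (estimator eps) = c"
    unfolding estimator_eq expct_def by (simp add: expectation_centred N.prob_space)
  then show ?thesis
    using second_moment by (simp add: var_def estimator_eq sum_second_moment_centred)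
qed

lemma sigma2_pos: "sigma2 eps > 0"
  unfolding sigma2_def using V0_pos V_nonneg
  by (intro sum_pos2[where i = 0]) (auto simp: zero_less_divide_iff)

definition normalised_deviation :: "nat \<Rightarrow> 'a \<Rightarrow> real" where
  "normalised_deviation l \<omega> = (dlt Xl l \<omega> - mu l)\<^sup>2 / V l"

definition tail :: "nat \<Rightarrow> real \<Rightarrow> real" where
  "tail l c = (if V l > 0 then M.expectation (\<lambda>\<omega>. normalised_deviation l \<omega> *
      indicator {\<omega>. c < normalised_deviation l \<omega>} \<omega>) else 0)"

lemma tail_tendsto_0_along_lindeberg_threshold:
  "\<nu> > 0 \<Longrightarrow> (\<lambda>l. tail l (exp ((2 * alpha - gamma) * real l) * (S l)\<^sup>2 * \<nu>)) \<longlonglongrightarrow> 0"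
  using lindeberg unfolding tail_def normalised_deviation_def expct_def .

lemma normalised_deviation_measurable[measurable]: "normalised_deviation l \<in> borel_measurable M"
  unfolding normalised_deviation_def by measurable

lemma normalised_deviation_nonneg: "normalised_deviation l \<omega> \<ge> 0"
  unfolding normalised_deviation_def using V_nonneg by simp

lemma integrable_normalised_deviation: "integrable M (normalised_deviation l)"
  unfolding normalised_deviation_def using integrable_centred_dlt_square by simp

lemma integrable_normalised_deviation_indicator:
  "integrable M (\<lambda>\<omega>. normalised_deviation l \<omega> * indicator {\<omega>. c < normalised_deviation l \<omega>} \<omega>)"
  by (rule Bochner_Integration.integrable_bound[OF integrable_normalised_deviation])
    (auto simp: indicator_def normalised_deviation_nonneg)

lemma tail_nonneg: "tail l c \<ge> 0"
  unfolding tail_def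
  by (auto intro!: Bochner_Integration.integral_nonneg simp: indicator_def normalised_deviation_nonneg)

lemma tail_antimono: "c \<le> c' \<Longrightarrow> tail l c' \<le> tail l c"
  unfolding tail_def using integrable_normalised_deviation_indicator
  by (auto intro!: integral_mono simp: indicator_def normalised_deviation_nonneg)

lemma tail_tendsto_0: "(\<lambda>n. tail l (real n)) \<longlonglongrightarrow> 0"
proof (cases "V l > 0")
  case True
  have "(\<lambda>n. M.expectation (\<lambda>\<omega>. normalised_deviation l \<omega> *
      indicator {\<omega>. real n < normalised_deviation l \<omega>} \<omega>)) \<longlonglongrightarrow> M.expectation (\<lambda>\<omega>. 0)"
  proof (rule integral_dominated_convergence[OF _ _ integrable_normalised_deviation])
    show "AE \<omega> in M. (\<lambda>n. normalised_deviation l \<omega> *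
        indicator {\<omega>. real n < normalised_deviation l \<omega>} \<omega>) \<longlonglongrightarrow> 0"
    proof (rule AE_I2)
      fix \<omega>
      have "\<forall>\<^sub>F n in sequentially. normalised_deviation l \<omega> *
          indicator {\<omega>. real n < normalised_deviation l \<omega>} \<omega> = 0"
        using eventually_ge_at_top[of "nat \<lceil>normalised_deviation l \<omega>\<rceil>"]
        by eventually_elim (auto simp: indicator_def)
      then show "(\<lambda>n. normalised_deviation l \<omega> *
          indicator {\<omega>. real n < normalised_deviation l \<omega>} \<omega>) \<longlonglongrightarrow> 0"
        by (rule tendsto_eventually)
    qed
  qed (auto simp: indicator_def normalised_deviation_nonneg)
  with True show ?thesis by (simp add: tail_def)
qed (simp add: tail_def)

lemma lindeberg_term_normalised_centred_le:
  fixes eps :: real and j :: "nat \<times> nat"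
  assumes "\<delta> > 0"
  defines "k \<equiv> (real (Ms eps (fst j)))\<^sup>2 * sigma2 eps"
  shows "lindeberg_term N (\<lambda>\<omega>. centred eps j \<omega> / sqrt (sigma2 eps)) \<delta>
    \<le> V (fst j) / k * tail (fst j) (k * \<delta>\<^sup>2 / V (fst j))"
proof -
  obtain l i where j: "j = (l, i)" by (cases j)
  have "k > 0" using sigma2_pos by (simp add: k_def)
  define f where "f y = (y - mu l)\<^sup>2 / k * indicator {y. \<delta>\<^sup>2 < (y - mu l)\<^sup>2 / k} y" for y
  have "(centred eps j \<omega> / sqrt (sigma2 eps))\<^sup>2 = (Y l i \<omega> - mu l)\<^sup>2 / k" for \<omega>
    using sigma2_pos[of eps] by (simp add: centred_def j k_def power_divide power_mult_distrib)
  then have "lindeberg_term N (\<lambda>\<omega>. centred eps j \<omega> / sqrt (sigma2 eps)) \<delta>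
      = N.expectation (\<lambda>\<omega>. f (Y l i \<omega>))"
    by (simp add: lindeberg_term_def f_def indicator_def)
  also have "\<dots> = M.expectation (\<lambda>\<omega>. f (dlt Xl l \<omega>))"
    by (rule integral_comp_Y) (simp add: f_def)
  also have "\<dots> \<le> V l / k * tail l (k * \<delta>\<^sup>2 / V l)"
  proof (cases "V l > 0")
    case True
    have "f (dlt Xl l \<omega>) = V l / k * (normalised_deviation l \<omega> *
        indicator {\<omega>. k * \<delta>\<^sup>2 / V l < normalised_deviation l \<omega>} \<omega>)" for \<omega>
      using True \<open>k > 0\<close>
      by (simp add: f_def normalised_deviation_def indicator_def field_simps)
    with True show ?thesis by (simp add: tail_def)
  next
    case False
    then have "V l = 0" using V_nonneg[of l] by simp
    have "M.expectation (\<lambda>\<omega>. f (dlt Xl l \<omega>)) \<le> M.expectation (\<lambda>\<omega>. (dlt Xl l \<omega> - mu l)\<^sup>2 / k)"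
      using integrable_centred_dlt_square[of l] \<open>k > 0\<close>
      by (intro integral_mono') (auto simp: f_def indicator_def)
    also have "\<dots> = 0" using \<open>V l = 0\<close> by (simp add: V_eq)
    finally show ?thesis using \<open>V l = 0\<close> by simp
  qed
  finally show ?thesis by (simp add: j)
qed

definition weighted_tail_sum :: "real \<Rightarrow> real \<Rightarrow> real" where
  "weighted_tail_sum eps \<delta> = (\<Sum>l\<le>L eps. V l / (real (Ms eps l) * sigma2 eps) *
      tail l ((real (Ms eps l))\<^sup>2 * sigma2 eps * \<delta>\<^sup>2 / V l))"

lemma sum_lindeberg_term_le_weighted_tail_sum:
  assumes "\<delta> > 0"
  shows "(\<Sum>j\<in>sample_index eps. lindeberg_term N (\<lambda>\<omega>. centred eps j \<omega> / sqrt (sigma2 eps)) \<delta>)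
    \<le> weighted_tail_sum eps \<delta>"
proof -
  have "(\<Sum>j\<in>sample_index eps. lindeberg_term N (\<lambda>\<omega>. centred eps j \<omega> / sqrt (sigma2 eps)) \<delta>)
      \<le> (\<Sum>j\<in>sample_index eps. V (fst j) / ((real (Ms eps (fst j)))\<^sup>2 * sigma2 eps) *
          tail (fst j) ((real (Ms eps (fst j)))\<^sup>2 * sigma2 eps * \<delta>\<^sup>2 / V (fst j)))"
    by (intro sum_mono lindeberg_term_normalised_centred_le[OF assms])
  also have "\<dots> = (\<Sum>l\<le>L eps. \<Sum>i\<in>{1..Ms eps l}. V l / ((real (Ms eps l))\<^sup>2 * sigma2 eps) *
          tail l ((real (Ms eps l))\<^sup>2 * sigma2 eps * \<delta>\<^sup>2 / V l))"
    unfolding sample_index_def by (subst sum.Sigma) (auto simp: case_prod_beta)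
  also have "\<dots> = weighted_tail_sum eps \<delta>"
    unfolding weighted_tail_sum_def by (simp add: power2_eq_square)
  finally show ?thesis .
qed

lemma weighted_tail_sum_nonneg: "weighted_tail_sum eps \<delta> \<ge> 0"
  unfolding weighted_tail_sum_def using V_nonneg sigma2_pos[of eps] tail_nonneg
  by (intro sum_nonneg mult_nonneg_nonneg divide_nonneg_nonneg) auto

lemma sum_tail_weights: "(\<Sum>l\<le>L eps. V l / (real (Ms eps l) * sigma2 eps)) = 1"
proof -
  have "(\<Sum>l\<le>L eps. V l / (real (Ms eps l) * sigma2 eps)) = sigma2 eps / sigma2 eps"
    unfolding sigma2_def sum_divide_distrib by (simp add: divide_divide_eq_left)
  then show ?thesis using sigma2_pos[of eps] by simp
qed

lemma ln_div_tendsto_at_top: "filterlim (\<lambda>eps. ln (calpha / eps) / alpha) at_top (at_right 0)"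
proof -
  have "filterlim (\<lambda>eps::real. - ln eps) at_top (at_right 0)"
    using ln_at_0 by (simp add: filterlim_uminus_at_bot)
  then have lim: "filterlim (\<lambda>eps. (ln calpha + - ln eps) * inverse alpha) at_top (at_right 0)"
    using alpha_pos
    by (intro filterlim_at_top_mult_tendsto_pos[OF tendsto_const] filterlim_tendsto_add_at_top) auto
  have eq: "\<forall>\<^sub>F eps in at_right 0. (ln calpha + - ln eps) * inverse alpha = ln (calpha / eps) / alpha"
    using eventually_at_right_less
    by (rule eventually_mono) (use calpha_pos in \<open>simp add: ln_div field_simps\<close>)
  show ?thesis using lim filterlim_cong[OF refl refl eq] by simp
qed

lemma L_ge: "real (L eps) \<ge> ln (calpha / eps) / alpha"
  unfolding Lev_def by linarith

lemma L_tendsto_at_top: "filterlim L at_top (at_right 0)"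
  unfolding filterlim_sequentially_iff_filterlim_real
  by (rule filterlim_at_top_mono[OF ln_div_tendsto_at_top]) (simp add: L_ge)

lemma eventually_eps_square_exp_L_le:
  "\<forall>\<^sub>F eps in at_right 0.
    0 < eps \<and> eps\<^sup>2 * exp (2 * alpha * real (L eps)) \<le> (exp alpha * calpha)\<^sup>2"
proof -
  have "\<forall>\<^sub>F eps in at_right 0. 0 < eps \<and> 0 \<le> ln (calpha / eps) / alpha"
    using eventually_at_right_less ln_div_tendsto_at_top
    by (intro eventually_conj) (simp_all add: filterlim_at_top)
  then show ?thesis
  proof (rule eventually_mono, clarify)
    fix eps :: real assume "0 < eps" and "0 \<le> ln (calpha / eps) / alpha"
    then have "real (L eps) \<le> ln (calpha / eps) / alpha + 1"
      unfolding Lev_def by linarith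
    then have "alpha * real (L eps) \<le> ln (calpha / eps) + alpha"
      using alpha_pos by (simp add: field_simps)
    then have "exp (alpha * real (L eps)) \<le> calpha / eps * exp alpha"
      using \<open>0 < eps\<close> calpha_pos by (metis divide_pos_pos exp_add exp_le_cancel_iff exp_ln)
    then have "eps * exp (alpha * real (L eps)) \<le> exp alpha * calpha"
      using \<open>0 < eps\<close> by (simp add: field_simps)
    then have "(eps * exp (alpha * real (L eps)))\<^sup>2 \<le> (exp alpha * calpha)\<^sup>2"
      using \<open>0 < eps\<close> by (intro power_mono) auto
    then show "eps\<^sup>2 * exp (2 * alpha * real (L eps)) \<le> (exp alpha * calpha)\<^sup>2"
      by (simp add: power_mult_distrib mult.assoc flip: exp_double)
  qed
qed

lemma Ms_le: "real (Ms eps l) \<le> 1 / eps\<^sup>2 * sqrt (V l / Cost l) * S (L eps) + 1"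
  and Ms_ge: "real (Ms eps l) \<ge> 1 / eps\<^sup>2 * sqrt (V l / Cost l) * S (L eps)"
proof -
  have "1 / eps\<^sup>2 * sqrt (V l / Cost l) * S (L eps) \<ge> 0"
    using S_pos[of "L eps"] V_nonneg[of l] Cost_pos[of l]
    by (auto intro!: mult_nonneg_nonneg divide_nonneg_nonneg)
  then show "real (Ms eps l) \<le> 1 / eps\<^sup>2 * sqrt (V l / Cost l) * S (L eps) + 1"
    and "real (Ms eps l) \<ge> 1 / eps\<^sup>2 * sqrt (V l / Cost l) * S (L eps)"
    unfolding Msamp_def by linarith+
qed

lemma V_div_Ms_ge:
  assumes "eps > 0"
  shows "V l / real (Ms eps l) \<ge> eps\<^sup>2 * (sqrt (V l * Cost l) / S (L eps) - eps\<^sup>2 * Cost l / (S (L eps))\<^sup>2)"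
proof -
  define b where "b = sqrt (V l * Cost l)"
  have "b \<ge> 0" using V_Cost_nonneg by (simp add: b_def)
  have V_eq_b: "V l = b\<^sup>2 / Cost l" and "sqrt (V l / Cost l) = b / Cost l"
    using V_nonneg[of l] Cost_pos[of l]
    by (simp_all add: b_def real_sqrt_divide real_sqrt_mult field_simps power2_eq_square)
  have "eps\<^sup>2 * (b / S (L eps) - eps\<^sup>2 * Cost l / (S (L eps))\<^sup>2)
      \<le> eps\<^sup>2 * b\<^sup>2 / (b * S (L eps) + eps\<^sup>2 * Cost l)"
    using \<open>b \<ge> 0\<close> Cost_pos[of l] S_pos \<open>eps > 0\<close> by (intro square_div_linear_ge) auto
  also have "\<dots> = V l / (1 / eps\<^sup>2 * sqrt (V l / Cost l) * S (L eps) + 1)"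
    using Cost_pos[of l] \<open>eps > 0\<close> \<open>b \<ge> 0\<close> S_pos[of "L eps"]
    unfolding \<open>sqrt (V l / Cost l) = b / Cost l\<close> unfolding V_eq_b by (simp add: field_simps)
  also have "\<dots> \<le> V l / real (Ms eps l)"
  proof (rule divide_left_mono[OF Ms_le V_nonneg])
    have "0 < real (Ms eps l)" by simp
    with Ms_le[of eps l] show "0 < (1 / eps\<^sup>2 * sqrt (V l / Cost l) * S (L eps) + 1) * real (Ms eps l)"
      by (intro mult_pos_pos) linarith+
  qed
  finally show ?thesis by (simp add: b_def)
qed

lemma sigma2_ge:
  assumes "eps > 0"
  shows "sigma2 eps \<ge> eps\<^sup>2 * (1 - eps\<^sup>2 * (\<Sum>l\<le>L eps. Cost l) / (S (L eps))\<^sup>2)"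
proof -
  have "eps\<^sup>2 * (1 - eps\<^sup>2 * (\<Sum>l\<le>L eps. Cost l) / (S (L eps))\<^sup>2)
      = (\<Sum>l\<le>L eps. eps\<^sup>2 * (sqrt (V l * Cost l) / S (L eps) - eps\<^sup>2 * Cost l / (S (L eps))\<^sup>2))"
    using S_pos[of "L eps"]
    by (simp add: Ssum_def sum_subtractf right_diff_distrib
        flip: sum_distrib_left sum_divide_distrib)
  also have "\<dots> \<le> sigma2 eps"
    unfolding sigma2_def using V_div_Ms_ge[OF assms] by (rule sum_mono)
  finally show ?thesis .
qed

lemma Cmax_pos: "Cmax > 0"
  using Cost_pos[of 0] Cost_le[of 0] by simp

lemma sum_Cost_le: "(\<Sum>l\<le>n. Cost l) \<le> Cmax * exp gamma / (exp gamma - 1) * exp (gamma * real n)"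
proof -
  have "exp gamma > 1" using gamma_pos by simp
  have "(\<Sum>l\<le>n. Cost l) \<le> Cmax * (\<Sum>l<Suc n. exp gamma ^ l)"
    using Cost_le by (simp add: sum_distrib_left lessThan_Suc_atMost mult.commute sum_mono
        flip: exp_of_nat_mult)
  also have "(\<Sum>l<Suc n. exp gamma ^ l) = (exp gamma ^ Suc n - 1) / (exp gamma - 1)"
    using \<open>exp gamma > 1\<close> by (simp add: sum_gp_strict field_simps)
  also have "\<dots> \<le> exp gamma ^ Suc n / (exp gamma - 1)"
    using \<open>exp gamma > 1\<close> by (simp add: divide_right_mono)
  also have "exp gamma ^ Suc n = exp gamma * exp (gamma * real n)"
    by (simp add: mult.commute flip: exp_of_nat_mult)
  finally show ?thesis
    using Cmax_pos by (simp add: mult_left_mono mult.assoc)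
qed

lemma eventually_sigma2_ge: "\<forall>\<^sub>F eps in at_right 0. eps\<^sup>2 / 2 \<le> sigma2 eps"
proof -
  define A where "A = exp alpha * calpha"
  define D where "D = Cmax * exp gamma / (exp gamma - 1)"
  have "A > 0" "D > 0" using calpha_pos Cmax_pos gamma_pos by (simp_all add: A_def D_def)
  have "((\<lambda>eps. exp ((gamma - 2 * alpha) * real (L eps)) / (S (L eps))\<^sup>2) \<longlongrightarrow> 0) (at_right 0)"
    by (rule filterlim_compose[OF exp_div_S_square_tendsto_0 L_tendsto_at_top])
  then have "\<forall>\<^sub>F eps in at_right 0.
      exp ((gamma - 2 * alpha) * real (L eps)) / (S (L eps))\<^sup>2 < 1 / (2 * D * A\<^sup>2)"
    by (rule order_tendstoD) (use \<open>A > 0\<close> \<open>D > 0\<close> in simp)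
  with eventually_eps_square_exp_L_le show ?thesis
  proof eventually_elim
    case (elim eps)
    then have "eps > 0" and eps_L: "eps\<^sup>2 * exp (2 * alpha * real (L eps)) \<le> A\<^sup>2"
      by (simp_all add: A_def)
    have "eps\<^sup>2 * (\<Sum>l\<le>L eps. Cost l) / (S (L eps))\<^sup>2
        \<le> eps\<^sup>2 * (D * exp (gamma * real (L eps))) / (S (L eps))\<^sup>2"
      using sum_Cost_le by (intro divide_right_mono mult_left_mono) (simp_all add: D_def)
    also have "\<dots> = D * (eps\<^sup>2 * exp (2 * alpha * real (L eps)))
        * (exp ((gamma - 2 * alpha) * real (L eps)) / (S (L eps))\<^sup>2)"
      by (simp add: algebra_simps flip: exp_add)
    also have "\<dots> \<le> D * A\<^sup>2 * (1 / (2 * D * A\<^sup>2))"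
      using eps_L elim \<open>D > 0\<close> by (intro mult_mono mult_left_mono) auto
    also have "\<dots> = 1 / 2" using \<open>A > 0\<close> \<open>D > 0\<close> by simp
    finally have "eps\<^sup>2 * (1 / 2) \<le> eps\<^sup>2 * (1 - eps\<^sup>2 * (\<Sum>l\<le>L eps. Cost l) / (S (L eps))\<^sup>2)"
      by (intro mult_left_mono) auto
    with sigma2_ge[OF \<open>eps > 0\<close>] show ?case by linarith
  qed
qed

definition kappa :: real where
  "kappa = 1 / (2 * (exp alpha * calpha)\<^sup>2 * Cmax)"

lemma kappa_pos: "kappa > 0"
  using calpha_pos Cmax_pos by (simp add: kappa_def)

lemma sample_ratio_ge:
  assumes "eps > 0" and eps_L: "eps\<^sup>2 * exp (2 * alpha * real (L eps)) \<le> (exp alpha * calpha)\<^sup>2"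
    and sigma2: "eps\<^sup>2 / 2 \<le> sigma2 eps" and "V l > 0"
  shows "kappa * exp (2 * alpha * real (L eps) - gamma * real l) * (S (L eps))\<^sup>2
    \<le> (real (Ms eps l))\<^sup>2 * sigma2 eps / V l"
proof -
  define a where "a = 1 / eps\<^sup>2 * sqrt (V l / Cost l) * S (L eps)"
  have "a \<ge> 0" using S_pos[of "L eps"] V_nonneg[of l] Cost_pos[of l] by (simp add: a_def)
  have "Cost l * (eps\<^sup>2 * exp (2 * alpha * real (L eps)))
      \<le> (Cmax * exp (gamma * real l)) * (exp alpha * calpha)\<^sup>2"
    using Cost_pos[of l] Cmax_pos by (intro mult_mono[OF Cost_le eps_L]) auto
  then have "kappa * exp (2 * alpha * real (L eps) - gamma * real l) \<le> 1 / (2 * eps\<^sup>2 * Cost l)"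
    using \<open>eps > 0\<close> Cost_pos[of l] calpha_pos Cmax_pos
    by (simp add: kappa_def exp_diff field_simps)
  then have "kappa * exp (2 * alpha * real (L eps) - gamma * real l) * (S (L eps))\<^sup>2
      \<le> 1 / (2 * eps\<^sup>2 * Cost l) * (S (L eps))\<^sup>2"
    by (rule mult_right_mono) simp
  also have "\<dots> = a\<^sup>2 * (eps\<^sup>2 / 2) / V l"
    using \<open>eps > 0\<close> Cost_pos[of l] \<open>V l > 0\<close>
    by (simp add: a_def power_mult_distrib power_divide field_simps power2_eq_square)
  also have "\<dots> \<le> (real (Ms eps l))\<^sup>2 * sigma2 eps / V l"
    using Ms_ge[of eps l] \<open>a \<ge> 0\<close> sigma2 \<open>V l > 0\<close>
    by (intro divide_right_mono mult_mono power_mono) (auto simp: a_def)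
  finally show ?thesis .
qed

lemma eventually_sample_ratio_ge:
  "\<forall>\<^sub>F eps in at_right 0. \<forall>l. V l > 0 \<longrightarrow>
    kappa * exp (2 * alpha * real (L eps) - gamma * real l) * (S (L eps))\<^sup>2
      \<le> (real (Ms eps l))\<^sup>2 * sigma2 eps / V l"
  using eventually_eps_square_exp_L_le eventually_sigma2_ge
  by eventually_elim (auto intro: sample_ratio_ge)

text \<open>Far levels are controlled by the Lindeberg hypothesis, the finitely many near levels
  by integrability alone.\<close>
lemma tail_small_beyond_thresholds:
  assumes "\<eta> > 0" and "\<nu> > 0"
  obtains N0 c0 where
    "\<And>l c. N0 \<le> l \<Longrightarrow> exp ((2 * alpha - gamma) * real l) * (S l)\<^sup>2 * \<nu> \<le> c \<Longrightarrow> tail l c < \<eta>"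
    and "\<And>l c. l < N0 \<Longrightarrow> c0 \<le> c \<Longrightarrow> tail l c < \<eta>"
proof -
  obtain N0 where N0: "\<And>l. N0 \<le> l \<Longrightarrow> tail l (exp ((2 * alpha - gamma) * real l) * (S l)\<^sup>2 * \<nu>) < \<eta>"
    using order_tendstoD(2)[OF tail_tendsto_0_along_lindeberg_threshold[OF \<open>\<nu> > 0\<close>] \<open>\<eta> > 0\<close>]
    by (auto simp: eventually_sequentially)
  have "\<forall>\<^sub>F n in sequentially. \<forall>l\<in>{..<N0}. tail l (real n) < \<eta>"
    using order_tendstoD(2)[OF tail_tendsto_0 \<open>\<eta> > 0\<close>] by (intro eventually_ball_finite) auto
  then obtain n where n: "\<And>l. l < N0 \<Longrightarrow> tail l (real n) < \<eta>"
    by (auto simp: eventually_sequentially)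
  show ?thesis
  proof
    show "tail l c < \<eta>" if "N0 \<le> l" "exp ((2 * alpha - gamma) * real l) * (S l)\<^sup>2 * \<nu> \<le> c" for l c
      using tail_antimono[OF that(2), of l] N0[OF that(1)] by linarith
    show "tail l c < \<eta>" if "l < N0" "real n \<le> c" for l c
      using tail_antimono[OF that(2), of l] n[OF that(1)] by linarith
  qed
qed

lemma eventually_sample_threshold_ge:
  assumes "\<delta> > 0"
  shows "\<forall>\<^sub>F eps in at_right 0. \<forall>l\<le>L eps. V l > 0 \<longrightarrow>
    exp ((2 * alpha - gamma) * real l) * (S l)\<^sup>2 * (kappa * \<delta>\<^sup>2)
      \<le> (real (Ms eps l))\<^sup>2 * sigma2 eps * \<delta>\<^sup>2 / V l \<and>
    (l < N0 \<longrightarrow> c0 \<le> (real (Ms eps l))\<^sup>2 * sigma2 eps * \<delta>\<^sup>2 / V l)"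
proof -
  have "kappa * \<delta>\<^sup>2 > 0" using kappa_pos \<open>\<delta> > 0\<close> by simp
  define K where "K = kappa * \<delta>\<^sup>2 * exp (- gamma * real N0) * (S 0)\<^sup>2"
  have "K > 0" using kappa_pos \<open>\<delta> > 0\<close> S_pos[of 0] by (simp add: K_def)
  have "filterlim (\<lambda>n::nat. K * exp (2 * alpha * real n)) at_top sequentially"
    using \<open>K > 0\<close> alpha_pos
    by (intro filterlim_tendsto_pos_mult_at_top[OF tendsto_const] filterlim_compose[OF exp_at_top]
        filterlim_tendsto_pos_mult_at_top[OF tendsto_const _ filterlim_real_sequentially]) auto
  from filterlim_compose[OF this L_tendsto_at_top]
  have "\<forall>\<^sub>F eps in at_right 0. c0 \<le> K * exp (2 * alpha * real (L eps))"
    by (simp add: filterlim_at_top)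
  with eventually_sample_ratio_ge show ?thesis
  proof (eventually_elim, intro allI impI)
    case (elim eps)
    fix l assume "l \<le> L eps" and "V l > 0"
    define B where "B = kappa * \<delta>\<^sup>2 * exp (2 * alpha * real (L eps) - gamma * real l) * (S (L eps))\<^sup>2"
    have B_le: "B \<le> (real (Ms eps l))\<^sup>2 * sigma2 eps * \<delta>\<^sup>2 / V l"
      using mult_right_mono[OF elim(1)[rule_format, OF \<open>V l > 0\<close>], of "\<delta>\<^sup>2"]
      by (simp add: B_def ac_simps)
    have "exp ((2 * alpha - gamma) * real l) * (S l)\<^sup>2
        \<le> exp (2 * alpha * real (L eps) - gamma * real l) * (S (L eps))\<^sup>2"
      using \<open>l \<le> L eps\<close> alpha_pos S_pos[of l] S_mono[OF \<open>l \<le> L eps\<close>]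
      by (intro mult_mono power_mono) (auto simp: algebra_simps)
    from mult_right_mono[OF this less_imp_le[OF \<open>kappa * \<delta>\<^sup>2 > 0\<close>]] B_le
    show "exp ((2 * alpha - gamma) * real l) * (S l)\<^sup>2 * (kappa * \<delta>\<^sup>2)
        \<le> (real (Ms eps l))\<^sup>2 * sigma2 eps * \<delta>\<^sup>2 / V l \<and>
      (l < N0 \<longrightarrow> c0 \<le> (real (Ms eps l))\<^sup>2 * sigma2 eps * \<delta>\<^sup>2 / V l)"
    proof (intro conjI impI)
      assume "l < N0"
      have "exp (- gamma * real N0) * exp (2 * alpha * real (L eps)) * (S 0)\<^sup>2
          \<le> exp (2 * alpha * real (L eps) - gamma * real l) * (S (L eps))\<^sup>2"
        using \<open>l < N0\<close> gamma_pos S_pos[of 0] S_mono[of 0 "L eps"]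
        by (intro mult_mono power_mono) (auto simp: algebra_simps simp flip: exp_add)
      from mult_right_mono[OF this less_imp_le[OF \<open>kappa * \<delta>\<^sup>2 > 0\<close>]]
      have "K * exp (2 * alpha * real (L eps)) \<le> B"
        by (simp add: K_def B_def ac_simps)
      with elim(2) B_le show "c0 \<le> (real (Ms eps l))\<^sup>2 * sigma2 eps * \<delta>\<^sup>2 / V l" by linarith
    qed (simp add: B_def ac_simps)
  qed
qed

lemma eventually_tail_at_sample_threshold_less:
  assumes "\<eta> > 0" and "\<delta> > 0"
  shows "\<forall>\<^sub>F eps in at_right 0. \<forall>l\<le>L eps.
    tail l ((real (Ms eps l))\<^sup>2 * sigma2 eps * \<delta>\<^sup>2 / V l) < \<eta>"
proof -
  have "kappa * \<delta>\<^sup>2 > 0" using kappa_pos \<open>\<delta> > 0\<close> by simp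
  then obtain N0 c0 where
    far: "\<And>l c. N0 \<le> l \<Longrightarrow> exp ((2 * alpha - gamma) * real l) * (S l)\<^sup>2 * (kappa * \<delta>\<^sup>2) \<le> c
      \<Longrightarrow> tail l c < \<eta>" and
    near: "\<And>l c. l < N0 \<Longrightarrow> c0 \<le> c \<Longrightarrow> tail l c < \<eta>"
    using tail_small_beyond_thresholds[OF \<open>\<eta> > 0\<close>] by blast
  from eventually_sample_threshold_ge[OF \<open>\<delta> > 0\<close>, of N0 c0] show ?thesis
  proof (eventually_elim, intro allI impI)
    case (elim eps)
    fix l assume "l \<le> L eps"
    show "tail l ((real (Ms eps l))\<^sup>2 * sigma2 eps * \<delta>\<^sup>2 / V l) < \<eta>"
    proof (cases "V l > 0")
      case True
      with elim \<open>l \<le> L eps\<close> show ?thesis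
        using far near by (cases "N0 \<le> l") auto
    qed (use \<open>\<eta> > 0\<close> in \<open>simp add: tail_def\<close>)
  qed
qed

lemma weighted_tail_sum_tendsto_0:
  assumes "\<delta> > 0"
  shows "((\<lambda>eps. weighted_tail_sum eps \<delta>) \<longlongrightarrow> 0) (at_right 0)"
proof (rule tendstoI)
  fix \<eta> :: real assume "\<eta> > 0"
  then have "\<eta> / 2 > 0" by simp
  from eventually_tail_at_sample_threshold_less[OF this \<open>\<delta> > 0\<close>]
  show "\<forall>\<^sub>F eps in at_right 0. dist (weighted_tail_sum eps \<delta>) 0 < \<eta>"
  proof eventually_elim
    case (elim eps)
    have "weighted_tail_sum eps \<delta> \<le> (\<Sum>l\<le>L eps. V l / (real (Ms eps l) * sigma2 eps) * (\<eta> / 2))"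
      unfolding weighted_tail_sum_def using elim V_nonneg sigma2_pos[of eps]
      by (intro sum_mono mult_left_mono) (auto intro: less_imp_le)
    also have "\<dots> = \<eta> / 2"
      unfolding sum_distrib_right[symmetric] sum_tail_weights by simp
    finally show ?case
      using weighted_tail_sum_nonneg[of eps \<delta>] \<open>\<eta> > 0\<close> by simp
  qed
qed

lemma normalised_variance_share_le:
  assumes ratio: "V l > 0 \<longrightarrow> kappa * exp (2 * alpha * real (L eps) - gamma * real l) * (S (L eps))\<^sup>2
      \<le> (real (Ms eps l))\<^sup>2 * sigma2 eps / V l"
    and "l \<le> L eps"
  shows "V l / ((real (Ms eps l))\<^sup>2 * sigma2 eps)
    \<le> exp ((gamma - 2 * alpha) * real (L eps)) / (S (L eps))\<^sup>2 / kappa"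
proof (cases "V l > 0")
  case True
  have "kappa * exp ((2 * alpha - gamma) * real (L eps)) * (S (L eps))\<^sup>2
      \<le> kappa * exp (2 * alpha * real (L eps) - gamma * real l) * (S (L eps))\<^sup>2"
    using \<open>l \<le> L eps\<close> gamma_pos kappa_pos by (intro mult_right_mono mult_left_mono) (auto simp: algebra_simps)
  also have "\<dots> \<le> (real (Ms eps l))\<^sup>2 * sigma2 eps / V l"
    using ratio True by simp
  finally have "inverse ((real (Ms eps l))\<^sup>2 * sigma2 eps / V l)
      \<le> inverse (kappa * exp ((2 * alpha - gamma) * real (L eps)) * (S (L eps))\<^sup>2)"
    using kappa_pos S_pos[of "L eps"] by (intro le_imp_inverse_le) auto
  moreover have "exp ((gamma - 2 * alpha) * real (L eps)) / (S (L eps))\<^sup>2 / kappa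
      = inverse (kappa * exp ((2 * alpha - gamma) * real (L eps)) * (S (L eps))\<^sup>2)"
    by (simp add: inverse_mult_distrib divide_inverse algebra_simps flip: exp_minus)
  ultimately show ?thesis by (simp add: inverse_divide)
qed (use V_nonneg[of l] kappa_pos in \<open>auto intro!: divide_nonneg_nonneg\<close>)

lemma max_normalised_variance_share_tendsto_0:
  "((\<lambda>eps. Max ((\<lambda>l. V l / ((real (Ms eps l))\<^sup>2 * var N (estimator eps))) ` {0..L eps}))
    \<longlongrightarrow> 0) (at_right 0)"
proof (rule real_tendsto_sandwich[OF _ _ tendsto_const])
  have "((\<lambda>eps. exp ((gamma - 2 * alpha) * real (L eps)) / (S (L eps))\<^sup>2) \<longlongrightarrow> 0) (at_right 0)"
    by (rule filterlim_compose[OF exp_div_S_square_tendsto_0 L_tendsto_at_top])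
  then show "((\<lambda>eps. exp ((gamma - 2 * alpha) * real (L eps)) / (S (L eps))\<^sup>2 / kappa) \<longlongrightarrow> 0)
      (at_right 0)"
    by (rule tendsto_divide_zero)
  show "\<forall>\<^sub>F eps in at_right 0. 0 \<le> Max ((\<lambda>l. V l / ((real (Ms eps l))\<^sup>2 * var N (estimator eps))) ` {0..L eps})"
  proof (intro always_eventually allI)
    fix eps
    have "0 \<le> V 0 / ((real (Ms eps 0))\<^sup>2 * var N (estimator eps))"
      using V_nonneg[of 0] sigma2_pos[of eps] by (simp add: var_estimator)
    also have "\<dots> \<le> Max ((\<lambda>l. V l / ((real (Ms eps l))\<^sup>2 * var N (estimator eps))) ` {0..L eps})"
      by (rule Max_ge) auto
    finally show "0 \<le> Max ((\<lambda>l. V l / ((real (Ms eps l))\<^sup>2 * var N (estimator eps))) ` {0..L eps})" .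
  qed
  show "\<forall>\<^sub>F eps in at_right 0. Max ((\<lambda>l. V l / ((real (Ms eps l))\<^sup>2 * var N (estimator eps))) ` {0..L eps})
      \<le> exp ((gamma - 2 * alpha) * real (L eps)) / (S (L eps))\<^sup>2 / kappa"
    using eventually_sample_ratio_ge
  proof eventually_elim
    case (elim eps)
    then have "V l / ((real (Ms eps l))\<^sup>2 * var N (estimator eps))
        \<le> exp ((gamma - 2 * alpha) * real (L eps)) / (S (L eps))\<^sup>2 / kappa" if "l \<le> L eps" for l
      using normalised_variance_share_le[OF spec[OF elim] that] by (simp add: var_estimator)
    then show ?case by (simp add: Max_le_iff)
  qed
qed

lemma estimator_clt:
  "conv_distr_at_right0
     (\<lambda>eps. distr N borel (\<lambda>\<omega>. (estimator eps \<omega> - expct M (Xl (L eps))) / sqrt (var N (estimator eps))))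
     std_normal_distribution"
  unfolding conv_distr_at_right0_def
proof (intro allI impI)
  fix e :: "nat \<Rightarrow> real" assume "\<forall>n. 0 < e n" and "e \<longlonglongrightarrow> 0"
  then have e: "filterlim e (at_right 0) sequentially"
    by (intro tendsto_imp_filterlim_at_right) auto
  define Z where "Z n j = (\<lambda>\<omega>. centred (e n) j \<omega> / sqrt (sigma2 (e n)))" for n j
  have "weak_conv_m (\<lambda>n. distr N borel (\<lambda>\<omega>. \<Sum>j\<in>sample_index (e n). Z n j \<omega>)) std_normal_distribution"
  proof (rule N.lindeberg_clt)
    show "N.indep_vars (\<lambda>_. borel) (Z n) (sample_index (e n))" for n
      unfolding Z_def
      by (rule N.indep_vars_compose2[OF indep_centred, where Y = "\<lambda>_ y. y / sqrt (sigma2 (e n))"])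
        measurable
    show "integrable N (\<lambda>\<omega>. (Z n j \<omega>)\<^sup>2)" for n j
      using integrable_centred_square by (simp add: Z_def power_divide)
    show "N.expectation (Z n j) = 0" for n j
      using expectation_centred by (simp add: Z_def)
    show "(\<Sum>j\<in>sample_index (e n). N.expectation (\<lambda>\<omega>. (Z n j \<omega>)\<^sup>2)) = 1" for n
      using sum_second_moment_centred[of "e n"] sigma2_pos[of "e n"]
      by (simp add: Z_def power_divide flip: sum_divide_distrib)
    show "(\<lambda>n. \<Sum>j\<in>sample_index (e n). lindeberg_term N (Z n j) \<delta>) \<longlonglongrightarrow> 0" if "\<delta> > 0" for \<delta>
    proof (rule real_tendsto_sandwich[OF _ _ tendsto_const])
      show "(\<lambda>n. weighted_tail_sum (e n) \<delta>) \<longlonglongrightarrow> 0"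
        by (rule filterlim_compose[OF weighted_tail_sum_tendsto_0[OF that] e])
      show "\<forall>\<^sub>F n in sequentially. (\<Sum>j\<in>sample_index (e n). lindeberg_term N (Z n j) \<delta>)
          \<le> weighted_tail_sum (e n) \<delta>"
        using sum_lindeberg_term_le_weighted_tail_sum[OF that] by (simp add: Z_def)
    qed (simp add: sum_nonneg N.lindeberg_term_nonneg)
  qed (rule finite_sample_index)
  moreover have "(\<lambda>\<omega>. (estimator (e n) \<omega> - expct M (Xl (L (e n)))) / sqrt (var N (estimator (e n))))
      = (\<lambda>\<omega>. \<Sum>j\<in>sample_index (e n). Z n j \<omega>)" for n
    by (simp add: Z_def estimator_minus_mean_eq var_estimator sum_divide_distrib)
  ultimately show "weak_conv_m (\<lambda>n. distr N borel
      (\<lambda>\<omega>. (estimator (e n) \<omega> - expct M (Xl (L (e n)))) / sqrt (var N (estimator (e n)))))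
    std_normal_distribution" by simp
qed

end

theorem theorem3:
  fixes M :: "'a measure" and N :: "'b measure"
    and X :: "'a \<Rightarrow> real" and Xl :: "nat \<Rightarrow> 'a \<Rightarrow> real"
    and Cost :: "nat \<Rightarrow> real"
    and Y :: "nat \<Rightarrow> nat \<Rightarrow> 'b \<Rightarrow> real"
    and alpha beta gamma calpha :: real
  assumes probM: "prob_space M"
    and probN: "prob_space N"
    and X_meas: "X \<in> borel_measurable M"
    and X_L2: "integrable M (\<lambda>\<omega>. (X \<omega>)\<^sup>2)"
    and Xl_meas: "\<And>l. Xl l \<in> borel_measurable M"
    and Xl_L2: "\<And>l. integrable M (\<lambda>\<omega>. (Xl l \<omega>)\<^sup>2)"
    and indep: "prob_space.indep_vars N (\<lambda>_. borel) (\<lambda>(l, i). Y l i) UNIV"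
    and law: "\<And>l i. distr N borel (Y l i) = distr M borel (dlt Xl l)"
    and pos: "alpha > 0" "beta > 0" "gamma > 0" "calpha > 0"
    and minle: "min beta gamma \<le> 2 * alpha"
    and bias: "\<And>l. \<bar>expct M (\<lambda>\<omega>. X \<omega> - Xl l \<omega>)\<bar> \<le> calpha * exp (- alpha * real l)"
    and varbd: "\<exists>C>0. \<forall>l. Vl M Xl l \<le> C * exp (- beta * real l)"
    and costbd: "\<exists>c C'. 0 < c \<and> c < C' \<and>
                   (\<forall>l. c * exp (gamma * real l) < Cost l \<and> Cost l < C' * exp (gamma * real l))"
    and gb: "gamma \<ge> beta"
    and V0: "Vl M Xl 0 > 0"
    and B_eq: "beta = gamma \<Longrightarrow> filterlim (Ssum M Xl Cost) at_top sequentially"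
    and B_gt: "gamma > beta \<Longrightarrow> beta < 2 * alpha \<and>
                 (\<exists>u. beta \<le> u \<and> u < 2 * alpha \<and>
                   liminf (\<lambda>k. ereal (Ssum M Xl Cost k * exp ((u - gamma) * real k / 2))) > 1)"
    and lindeberg: "\<And>\<nu>. \<nu> > 0 \<Longrightarrow>
       (\<lambda>l. if Vl M Xl l > 0 then
              expct M (\<lambda>\<omega>. ((dlt Xl l \<omega> - expct M (dlt Xl l))\<^sup>2 / Vl M Xl l) *
                 indicator {\<omega>. (dlt Xl l \<omega> - expct M (dlt Xl l))\<^sup>2 / Vl M Xl l >
                     exp ((2 * alpha - gamma) * real l) * (Ssum M Xl Cost l)\<^sup>2 * \<nu>} \<omega>)
            else 0) \<longlonglongrightarrow> 0"
  shows "conv_distr_at_right0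
           (\<lambda>eps. distr N borel
              (\<lambda>\<omega>. (mlmc M Xl Cost calpha alpha Y eps \<omega> - expct M (Xl (Lev calpha alpha eps)))
                    / sqrt (var N (mlmc M Xl Cost calpha alpha Y eps))))
           std_normal_distribution
       \<and> ((\<lambda>eps. Max ((\<lambda>l. Vl M Xl l /
               ((real (Msamp M Xl Cost calpha alpha eps l))\<^sup>2 * var N (mlmc M Xl Cost calpha alpha Y eps)))
               ` {0..Lev calpha alpha eps})) \<longlongrightarrow> 0) (at_right 0)"
proof -
  obtain c Cmax where "0 < c"
    and Cost_bounds: "\<And>l. c * exp (gamma * real l) < Cost l \<and> Cost l < Cmax * exp (gamma * real l)"
    using costbd by blast
  have "\<And>l. Cost l > 0"
    using Cost_bounds \<open>0 < c\<close> by (meson exp_gt_zero mult_pos_pos order.strict_trans)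
  moreover have "\<And>l. Cost l \<le> Cmax * exp (gamma * real l)"
    using Cost_bounds by (simp add: less_imp_le)
  moreover have "(\<lambda>k. exp ((gamma - 2 * alpha) * real k) / (Ssum M Xl Cost k)\<^sup>2) \<longlonglongrightarrow> 0"
  proof (rule exp_div_square_tendsto_0_by_cases[OF minle gb B_eq])
    show "\<exists>u. u < 2 * alpha \<and> liminf (\<lambda>k. ereal (Ssum M Xl Cost k * exp ((u - gamma) * real k / 2))) > 1"
      if "gamma > beta" using B_gt[OF that] by blast
  qed
  ultimately interpret mlmc_lindeberg M N Xl Cost Y alpha gamma calpha Cmax
    by (intro mlmc_lindeberg.intro mlmc_lindeberg_axioms.intro probM probN)
      (simp_all add: Xl_meas Xl_L2 indep law pos V0 lindeberg)
  show ?thesis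
    using estimator_clt max_normalised_variance_share_tendsto_0 by simp
qed

end
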